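(* Let $d\ge1$, $p\ge1$, $\sigma>0$ and let $F$, $U$ satisfy the standing assumption of the context. For every $m\in\mathcal P_p(\mathbb R^d)$, the measure $\hat m$ with density \[ \hat m(x)=\frac{1}{Z_m}\exp\Bigl(-\frac{2}{\sigma^2}\frac{\delta F}{\delta m}(m,x)-U(x)\Bigr), \] where $Z_m$ is the normalization constant, is well defined and belongs to $\mathcal P_p(\mathbb R^d)$. Moreover, there exist constants $c,C$ with $0<c<1<C<+\infty$ such that for every $m\in\mathcal P_p(\mathbb R^d)$ and every $x\in\mathbb R^d$, $c\,e^{-U(x)}\le\hat m(x)\le C\,e^{-U(x)}$. Finally, there exists a constant $L>0$ such that for all $m,m'\in\mathcal P_p(\mathbb R^d)$ and every $x\in\mathbb R^d$, $|\hat m(x)-\hat m'(x)|\le L\,\mathcal W_p(m,m')\,e^{-U(x)}$, where $\hat m'$ is defined from $m'$ in the same way.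
   Context: $\mathcal P(\mathbb R^d)$ denotes the Borel probability measures on $\mathbb R^d$, $\mathcal P_p(\mathbb R^d)$ those with finite $p$-th moment, $\mathcal W_p$ the $p$-Wasserstein distance. Standing assumption: (a) $F:\mathcal P(\mathbb R^d)\to\mathbb R$ is non-negative and there is a continuous function $\frac{\delta F}{\delta m}:\mathcal P(\mathbb R^d)\times\mathbb R^d\to\mathbb R$ such that for all $m_0,m_1$, $F(m_1)-F(m_0)=\int_0^1\int\frac{\delta F}{\delta m}(m_\lambda,x)\,(m_1-m_0)(dx)\,d\lambda$ with $m_\lambda=(1-\lambda)m_0+\lambda m_1$; and there are $L_F,M_F>0$ with $|\frac{\delta F}{\delta m}(m,x)-\frac{\delta F}{\delta m}(m',x')|\le L_F(\mathcal W_p(m,m')+|x-x'|)$ and $|\frac{\delta F}{\delta m}(m,x)|\le M_F$ for all $m,m',x,x'$. (b) $U:\mathbb R^d\to\mathbb R$ is measurable, $\int e^{-U}dx=1$, $\operatorname{ess\,inf}U>-\infty$, $\liminf_{|x|\to\infty}U(x)/|x|^p>0$. *)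

theory Defs
  imports "HOL-Probability.Probability"
begin

definition Prob :: "('a::euclidean_space) measure set" where
  "Prob = {m. prob_space m \<and> sets m = sets borel}"

definition Prob_p :: "real \<Rightarrow> ('a::euclidean_space) measure set" where
  "Prob_p p = {m. m \<in> Prob \<and> integrable m (\<lambda>x. norm x powr p)}"

definition couplings :: "('a::euclidean_space) measure \<Rightarrow> 'a measure \<Rightarrow> ('a \<times> 'a) measure set" where
  "couplings m m' = {\<pi>. prob_space \<pi> \<and> sets \<pi> = sets borel \<and>
      distr \<pi> borel fst = m \<and> distr \<pi> borel snd = m'}"

definition ot_cost :: "real \<Rightarrow> ('a::euclidean_space) measure \<Rightarrow> 'a measure \<Rightarrow> ennreal" where
  "ot_cost p m m' = (INF \<pi>\<in>couplings m m'. \<integral>\<^sup>+ z. ennreal (dist (fst z) (snd z) powr p) \<partial>\<pi>)"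

definition Wass :: "real \<Rightarrow> ('a::euclidean_space) measure \<Rightarrow> 'a measure \<Rightarrow> ennreal" where
  "Wass p m m' = (if ot_cost p m m' = \<infinity> then \<infinity>
                  else ennreal (enn2real (ot_cost p m m') powr (1 / p)))"

definition mixture :: "real \<Rightarrow> ('a::euclidean_space) measure \<Rightarrow> 'a measure \<Rightarrow> 'a measure" where
  "mixture l m0 m1 = measure_of UNIV (sets borel)
      (\<lambda>A. ennreal ((1 - l) * measure m0 A + l * measure m1 A))"

definition Zconst :: "real \<Rightarrow> (('a::euclidean_space) measure \<Rightarrow> 'a \<Rightarrow> real) \<Rightarrow> ('a \<Rightarrow> real)
    \<Rightarrow> 'a measure \<Rightarrow> real" where
  "Zconst \<sigma> dF U m = (\<integral>x. exp (- (2 / \<sigma>\<^sup>2) * dF m x - U x) \<partial>lborel)"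

definition hat_dens :: "real \<Rightarrow> (('a::euclidean_space) measure \<Rightarrow> 'a \<Rightarrow> real) \<Rightarrow> ('a \<Rightarrow> real)
    \<Rightarrow> 'a measure \<Rightarrow> 'a \<Rightarrow> real" where
  "hat_dens \<sigma> dF U m x = exp (- (2 / \<sigma>\<^sup>2) * dF m x - U x) / Zconst \<sigma> dF U m"

end

theory Submission
  imports Defs
begin

text \<open>
  Put \<open>K = 2 M_F / \<sigma>\<^sup>2\<close>. The numerator \<open>exp (-(2/\<sigma>\<^sup>2) \<delta>F/\<delta>m (m, x))\<close> lies in
  \<open>[exp (-K), exp K]\<close>, hence so does \<open>Z_m\<close>, because \<open>exp (-U)\<close> is a probability density;
  this gives \<open>c = exp (-2K)\<close> and \<open>C = exp (2K)\<close>. As \<open>\<delta>F/\<delta>m\<close> is \<open>L_F\<close>-Lipschitz in \<open>m\<close>,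
  numerator and \<open>Z_m\<close> are Lipschitz in \<open>W_p\<close> uniformly in \<open>x\<close>, and so is their quotient.
  Finite \<open>p\<close>-th moments come from the growth of \<open>U\<close>: far out,
  \<open>exp (-U x) \<parallel>x\<parallel>^p \<le> (2/a) exp (-a \<parallel>x\<parallel> / 2)\<close>, which is dominated by a product of
  one-dimensional Laplace densities.
\<close>

lemma nn_integral_exp_neg_abs_finite:
  fixes \<beta> :: real
  assumes \<beta>: "\<beta> > 0"
  shows "(\<integral>\<^sup>+t. ennreal (exp (- \<beta> * \<bar>t\<bar>)) \<partial>lborel) < \<infinity>"
proof -
  let ?e = "\<lambda>t. ennreal (exponential_density \<beta> t)"
  have [measurable]: "exponential_density \<beta> \<in> borel_measurable borel"
    by (simp add: exponential_density_def)
  have right: "(\<integral>\<^sup>+t. ?e t \<partial>lborel) = 1"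
  proof -
    interpret prob_space "density lborel (exponential_density \<beta>)"
      using prob_space_exponential_density[OF \<beta>] .
    show ?thesis
      using emeasure_space_1 by (simp add: emeasure_density)
  qed
  then have left: "(\<integral>\<^sup>+t. ?e (- t) \<partial>lborel) = 1"
    using nn_integral_real_affine[of ?e "-1" 0] by simp
  have "ennreal (exp (- \<beta> * \<bar>t\<bar>)) \<le> ennreal (1 / \<beta>) * (?e t + ?e (- t))" for t
  proof -
    have "exp (- \<beta> * \<bar>t\<bar>) \<le> (1 / \<beta>) * (exponential_density \<beta> t + exponential_density \<beta> (- t))"
      using \<beta> by (auto simp: exponential_density_def field_simps abs_if)
    then show ?thesis
      by (metis \<beta> divide_nonneg_pos ennreal_leI ennreal_mult' ennreal_plus
          exponential_density_nonneg less_eq_real_def zero_le_one)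
  qed
  then have "(\<integral>\<^sup>+t. ennreal (exp (- \<beta> * \<bar>t\<bar>)) \<partial>lborel)
      \<le> (\<integral>\<^sup>+t. ennreal (1 / \<beta>) * (?e t + ?e (- t)) \<partial>lborel)"
    by (intro nn_integral_mono)
  also have "\<dots> = ennreal (1 / \<beta>) * ((\<integral>\<^sup>+t. ?e t \<partial>lborel) + (\<integral>\<^sup>+t. ?e (- t) \<partial>lborel))"
    by (subst nn_integral_cmult) (auto simp: nn_integral_add)
  also have "\<dots> < \<infinity>"
    using right left by (simp add: ennreal_mult_less_top)
  finally show ?thesis .
qed

lemma integrable_exp_neg_l1_norm:
  fixes \<beta> :: real
  assumes \<beta>: "\<beta> > 0"
  shows "integrable (lborel :: 'a::euclidean_space measure)
           (\<lambda>x. exp (- \<beta> * (\<Sum>b\<in>Basis. \<bar>x \<bullet> b\<bar>)))"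
proof (rule integrableI_nonneg)
  have prod: "ennreal (exp (- \<beta> * (\<Sum>b\<in>Basis. \<bar>x \<bullet> b\<bar>)))
      = (\<Prod>b\<in>Basis. ennreal (exp (- \<beta> * \<bar>x \<bullet> b\<bar>)))" for x :: 'a
    by (simp add: sum_distrib_left exp_sum[symmetric] prod_ennreal sum_negf)
  have "(\<integral>\<^sup>+x. ennreal (exp (- \<beta> * (\<Sum>b\<in>Basis. \<bar>x \<bullet> b\<bar>))) \<partial>(lborel :: 'a measure))
      = (\<Prod>b\<in>(Basis :: 'a set). \<integral>\<^sup>+t. ennreal (exp (- \<beta> * \<bar>t\<bar>)) \<partial>lborel)"
    unfolding prod by (rule nn_integral_lborel_prod) auto
  also have "\<dots> < \<infinity>"
    using nn_integral_exp_neg_abs_finite[OF \<beta>]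
    by (simp add: less_top[symmetric] power_eq_top_ennreal)
  finally show "(\<integral>\<^sup>+x. ennreal (exp (- \<beta> * (\<Sum>b\<in>Basis. \<bar>x \<bullet> b\<bar>))) \<partial>(lborel :: 'a measure)) < \<infinity>" .
qed auto

lemma sum_Basis_abs_inner_le:
  fixes x :: "'a::euclidean_space"
  shows "(\<Sum>b\<in>Basis. \<bar>x \<bullet> b\<bar>) \<le> DIM('a) * norm x"
proof -
  have "(\<Sum>b\<in>Basis. \<bar>x \<bullet> b\<bar>) \<le> (\<Sum>b\<in>(Basis :: 'a set). norm x)"
    by (intro sum_mono) (simp add: Basis_le_norm)
  then show ?thesis by simp
qed

lemma mult_exp_neg_le:
  fixes a s :: real
  assumes "a > 0"
  shows "s * exp (- a * s) \<le> (2 / a) * exp (- a * s / 2)"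
proof -
  have "a * s / 2 \<le> exp (a * s / 2)"
    using exp_ge_add_one_self[of "a * s / 2"] by linarith
  then have "s * exp (- (a * s / 2)) \<le> 2 / a"
    using assms by (simp add: exp_minus field_simps)
  then have "s * exp (- (a * s / 2)) * exp (- (a * s / 2)) \<le> (2 / a) * exp (- (a * s / 2))"
    by (intro mult_right_mono) auto
  then show ?thesis
    by (simp add: mult.assoc exp_add[symmetric])
qed

lemma integrable_exp_neg_mult_norm_powr:
  fixes U :: "'a::euclidean_space \<Rightarrow> real" and p a R :: real
  assumes [measurable]: "U \<in> borel_measurable borel"
    and U_int: "integrable lborel (\<lambda>x. exp (- U x))"
    and p: "p \<ge> 1" and a: "a > 0"
    and growth: "\<And>x. R \<le> norm x \<Longrightarrow> a * norm x powr p \<le> U x"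
  shows "integrable lborel (\<lambda>x. exp (- U x) * norm x powr p)"
proof -
  define R' where "R' = max R 1"
  define \<beta> where "\<beta> = a / (2 * DIM('a))"
  have \<beta>: "\<beta> > 0" using a by (simp add: \<beta>_def)
  let ?bound = "\<lambda>x. R' powr p * exp (- U x) + (2 / a) * exp (- \<beta> * (\<Sum>b\<in>Basis. \<bar>x \<bullet> b\<bar>))"
  have "exp (- U x) * norm x powr p \<le> ?bound x" for x :: 'a
  proof (cases "norm x < R'")
    case True
    then have "norm x powr p \<le> R' powr p" using p by (intro powr_mono2) auto
    then have "exp (- U x) * norm x powr p \<le> R' powr p * exp (- U x)"
      by (simp add: mult.commute)
    moreover have "0 \<le> (2 / a) * exp (- \<beta> * (\<Sum>b\<in>Basis. \<bar>x \<bullet> b\<bar>))" using a by simp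
    ultimately show ?thesis by linarith
  next
    case False
    define s where "s = norm x powr p"
    have "norm x \<ge> 1" "R \<le> norm x" using False by (auto simp: R'_def)
    then have s: "norm x \<le> s" and U: "a * s \<le> U x"
      using powr_mono[OF p, of "norm x"] growth by (auto simp: s_def)
    have "\<beta> * (\<Sum>b\<in>Basis. \<bar>x \<bullet> b\<bar>) \<le> \<beta> * (DIM('a) * norm x)"
      using \<beta> sum_Basis_abs_inner_le[of x] by (intro mult_left_mono) auto
    also have "\<dots> \<le> a * s / 2" using s a by (simp add: \<beta>_def)
    finally have l1: "exp (- a * s / 2) \<le> exp (- \<beta> * (\<Sum>b\<in>Basis. \<bar>x \<bullet> b\<bar>))" by simp
    have "exp (- U x) \<le> exp (- a * s)" using U by simp
    moreover have "0 \<le> s" using s norm_ge_zero[of x] by linarith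
    ultimately have "exp (- U x) * s \<le> s * exp (- a * s)"
      by (metis mult.commute mult_right_mono)
    also have "\<dots> \<le> (2 / a) * exp (- a * s / 2)"
      using mult_exp_neg_le[OF a] .
    also have "\<dots> \<le> (2 / a) * exp (- \<beta> * (\<Sum>b\<in>Basis. \<bar>x \<bullet> b\<bar>))"
      using l1 a by (intro mult_left_mono) auto
    finally have "exp (- U x) * norm x powr p \<le> (2 / a) * exp (- \<beta> * (\<Sum>b\<in>Basis. \<bar>x \<bullet> b\<bar>))"
      by (simp only: s_def)
    moreover have "0 \<le> R' powr p * exp (- U x)" by simp
    ultimately show ?thesis by linarith
  qed
  then have "AE x in lborel. norm (exp (- U x) * norm x powr p) \<le> norm (?bound x)"
    using a by (intro AE_I2) simp
  moreover have "integrable lborel ?bound"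
    using U_int integrable_exp_neg_l1_norm[OF \<beta>, where 'a='a]
    by (intro Bochner_Integration.integrable_add integrable_mult_right)
  moreover have "(\<lambda>x. exp (- U x) * norm x powr p) \<in> borel_measurable lborel"
    by measurable
  ultimately show ?thesis
    using Bochner_Integration.integrable_bound by blast
qed

lemma powr_growth_of_Liminf_pos:
  fixes U :: "'a::real_normed_vector \<Rightarrow> real"
  assumes "Liminf at_infinity (\<lambda>x. ereal (U x / norm x powr p)) > 0"
  obtains a R where "a > 0" "\<And>x. R \<le> norm x \<Longrightarrow> a * norm x powr p \<le> U x"
proof -
  obtain y where y: "0 < y" "y < Liminf at_infinity (\<lambda>x. ereal (U x / norm x powr p))"
    using dense[OF assms] by blast
  obtain a where a: "a > 0" "ereal a < Liminf at_infinity (\<lambda>x. ereal (U x / norm x powr p))"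
  proof (cases y)
    case (real r)
    then show ?thesis using y that by auto
  qed (use y in auto)
  obtain b where b: "\<And>x. b \<le> norm x \<Longrightarrow> a < U x / norm x powr p"
    using less_LiminfD[OF a(2)] unfolding eventually_at_infinity by auto
  have "a * norm x powr p \<le> U x" if "max b 1 \<le> norm x" for x
  proof -
    have "norm x > 0" using that by linarith
    then have "norm x powr p > 0" by simp
    then show ?thesis using b[of x] that by (simp add: pos_less_divide_eq)
  qed
  with a(1) show ?thesis by (rule that)
qed

lemma abs_exp_diff_le:
  fixes s t K :: real
  assumes "s \<le> K" "t \<le> K"
  shows "\<bar>exp s - exp t\<bar> \<le> exp K * \<bar>s - t\<bar>"
proof -
  have *: "exp v - exp u \<le> exp K * (v - u)" if "u \<le> v" "v \<le> K" for u v :: real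
  proof -
    have "1 - exp (u - v) \<le> v - u" using exp_ge_add_one_self[of "u - v"] by linarith
    then have "exp v * (1 - exp (u - v)) \<le> exp v * (v - u)" by (intro mult_left_mono) auto
    also have "\<dots> \<le> exp K * (v - u)" using that by (intro mult_right_mono) auto
    finally show ?thesis by (simp add: algebra_simps exp_diff)
  qed
  show ?thesis
    using *[of s t] *[of t s] assms by (cases "s \<le> t") (auto simp: abs_if)
qed

lemma abs_divide_diff_le:
  fixes a b y z :: real
  assumes "y > 0" "z > 0"
  shows "\<bar>a / y - b / z\<bar> \<le> \<bar>a - b\<bar> / y + \<bar>b\<bar> * \<bar>y - z\<bar> / (y * z)"
proof -
  have "a / y - b / z = (a - b) / y + b * (z - y) / (y * z)"
    using assms by (simp add: field_simps)
  also have "\<bar>\<dots>\<bar> \<le> \<bar>(a - b) / y\<bar> + \<bar>b * (z - y) / (y * z)\<bar>"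
    by (rule abs_triangle_ineq)
  also have "\<dots> = \<bar>a - b\<bar> / y + \<bar>b\<bar> * \<bar>y - z\<bar> / (y * z)"
    using assms by (simp add: abs_mult abs_minus_commute)
  finally show ?thesis .
qed

definition gibbs_partition :: "('a::euclidean_space \<Rightarrow> real) \<Rightarrow> ('a \<Rightarrow> real) \<Rightarrow> real" where
  "gibbs_partition U h = (\<integral>x. exp (- h x - U x) \<partial>lborel)"

definition gibbs_density :: "('a::euclidean_space \<Rightarrow> real) \<Rightarrow> ('a \<Rightarrow> real) \<Rightarrow> 'a \<Rightarrow> real" where
  "gibbs_density U h x = exp (- h x - U x) / gibbs_partition U h"

locale normalized_potential =
  fixes U :: "'a::euclidean_space \<Rightarrow> real"
  assumes measurable_U [measurable]: "U \<in> borel_measurable borel"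
    and integrable_exp_neg_U: "integrable lborel (\<lambda>x. exp (- U x))"
    and integral_exp_neg_U: "(\<integral>x. exp (- U x) \<partial>lborel) = 1"
begin

lemma exp_perturbed_bounds:
  fixes h :: "'a \<Rightarrow> real"
  assumes "\<bar>h x\<bar> \<le> K"
  shows "exp (- K) * exp (- U x) \<le> exp (- h x - U x)"
    and "exp (- h x - U x) \<le> exp K * exp (- U x)"
  using assms by (simp_all add: exp_diff[symmetric] exp_add[symmetric] abs_le_iff)

lemma integrable_exp_perturbed:
  assumes [measurable]: "h \<in> borel_measurable borel" and "\<And>x. \<bar>h x\<bar> \<le> K"
  shows "integrable lborel (\<lambda>x. exp (- h x - U x))"
proof (rule Bochner_Integration.integrable_bound)
  show "integrable lborel (\<lambda>x. exp K * exp (- U x))"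
    using integrable_exp_neg_U by (rule integrable_mult_right)
  show "AE x in lborel. norm (exp (- h x - U x)) \<le> norm (exp K * exp (- U x))"
    using exp_perturbed_bounds(2) assms(2) by (intro AE_I2) simp
qed measurable

lemma gibbs_partition_bounds:
  assumes [measurable]: "h \<in> borel_measurable borel" and h: "\<And>x. \<bar>h x\<bar> \<le> K"
  shows "exp (- K) \<le> gibbs_partition U h" and "gibbs_partition U h \<le> exp K"
proof -
  have int: "integrable lborel (\<lambda>x. exp (- h x - U x))"
    by (rule integrable_exp_perturbed[OF assms])
  have "(\<integral>x. exp (- K) * exp (- U x) \<partial>lborel) \<le> gibbs_partition U h"
    unfolding gibbs_partition_def
    using integrable_exp_neg_U int exp_perturbed_bounds(1)[OF h] by (intro integral_mono) auto
  then show "exp (- K) \<le> gibbs_partition U h"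
    using integral_exp_neg_U by simp
  have "gibbs_partition U h \<le> (\<integral>x. exp K * exp (- U x) \<partial>lborel)"
    unfolding gibbs_partition_def
    using integrable_exp_neg_U int exp_perturbed_bounds(2)[OF h] by (intro integral_mono) auto
  then show "gibbs_partition U h \<le> exp K"
    using integral_exp_neg_U by simp
qed

lemma gibbs_partition_pos:
  assumes "h \<in> borel_measurable borel" and "\<And>x. \<bar>h x\<bar> \<le> K"
  shows "gibbs_partition U h > 0"
  using exp_gt_zero gibbs_partition_bounds(1)[OF assms] by (rule less_le_trans)

lemma abs_exp_perturbed_diff_le:
  fixes h1 h2 :: "'a \<Rightarrow> real"
  assumes "\<bar>h1 x\<bar> \<le> K" "\<bar>h2 x\<bar> \<le> K" "\<bar>h1 x - h2 x\<bar> \<le> \<delta>"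
  shows "\<bar>exp (- h1 x) - exp (- h2 x)\<bar> \<le> exp K * \<delta>"
proof -
  have "\<bar>exp (- h1 x) - exp (- h2 x)\<bar> \<le> exp K * \<bar>- h1 x - - h2 x\<bar>"
    using assms by (intro abs_exp_diff_le) auto
  also have "\<dots> \<le> exp K * \<delta>"
    using assms(3) by (simp add: abs_minus_commute)
  finally show ?thesis .
qed

lemma gibbs_partition_lipschitz:
  assumes [measurable]: "h1 \<in> borel_measurable borel" "h2 \<in> borel_measurable borel"
    and bdd: "\<And>x. \<bar>h1 x\<bar> \<le> K" "\<And>x. \<bar>h2 x\<bar> \<le> K"
    and close: "\<And>x. \<bar>h1 x - h2 x\<bar> \<le> \<delta>"
  shows "\<bar>gibbs_partition U h1 - gibbs_partition U h2\<bar> \<le> exp K * \<delta>"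
proof -
  have int: "integrable lborel (\<lambda>x. exp (- h1 x - U x))" "integrable lborel (\<lambda>x. exp (- h2 x - U x))"
    using integrable_exp_perturbed[OF assms(1) bdd(1)] integrable_exp_perturbed[OF assms(2) bdd(2)] .
  have split: "exp (- h x - U x) = exp (- h x) * exp (- U x)" for h :: "'a \<Rightarrow> real" and x
    by (simp add: exp_diff exp_minus field_simps)
  have "\<bar>exp (- h1 x - U x) - exp (- h2 x - U x)\<bar> \<le> exp K * \<delta> * exp (- U x)" for x
  proof -
    have "\<bar>exp (- h1 x - U x) - exp (- h2 x - U x)\<bar> = \<bar>exp (- h1 x) - exp (- h2 x)\<bar> * exp (- U x)"
      unfolding split left_diff_distrib[symmetric] abs_mult by simp
    also have "\<dots> \<le> exp K * \<delta> * exp (- U x)"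
      using abs_exp_perturbed_diff_le[of h1 x K h2 \<delta>] bdd close by (intro mult_right_mono) auto
    finally show ?thesis .
  qed
  then have "\<bar>\<integral>x. exp (- h1 x - U x) - exp (- h2 x - U x) \<partial>lborel\<bar> \<le> (\<integral>x. exp K * \<delta> * exp (- U x) \<partial>lborel)"
    using int integrable_exp_neg_U by (intro integral_abs_bound_integral) auto
  then show ?thesis
    using int integral_exp_neg_U by (simp add: gibbs_partition_def)
qed

lemma gibbs_density_eq:
  "gibbs_density U h x = exp (- U x) * (exp (- h x) / gibbs_partition U h)"
  by (simp add: gibbs_density_def exp_diff exp_minus field_simps)

lemma gibbs_density_bounds:
  assumes "h \<in> borel_measurable borel" and h: "\<And>x. \<bar>h x\<bar> \<le> K"
  shows "exp (- (2 * K)) * exp (- U x) \<le> gibbs_density U h x"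
    and "gibbs_density U h x \<le> exp (2 * K) * exp (- U x)"
proof -
  let ?Z = "gibbs_partition U h"
  have Z: "exp (- K) \<le> ?Z" "?Z \<le> exp K" "?Z > 0"
    using gibbs_partition_bounds[OF assms] gibbs_partition_pos[OF assms] by auto
  have num: "exp (- K) \<le> exp (- h x)" "exp (- h x) \<le> exp K"
    using h[of x] by (auto simp: abs_le_iff)
  have "exp (- (2 * K)) = exp (- K) / exp K" by (simp add: exp_diff[symmetric])
  also have "\<dots> \<le> exp (- h x) / ?Z"
    using Z num by (intro frac_le) auto
  finally have "exp (- (2 * K)) \<le> exp (- h x) / ?Z" .
  then have "exp (- U x) * exp (- (2 * K)) \<le> exp (- U x) * (exp (- h x) / ?Z)"
    by (rule mult_left_mono) simp
  then show "exp (- (2 * K)) * exp (- U x) \<le> gibbs_density U h x"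
    unfolding gibbs_density_eq by (simp only: mult.commute)
  have "exp (- h x) / ?Z \<le> exp K / exp (- K)"
    using Z num by (intro frac_le) auto
  also have "\<dots> = exp (2 * K)" by (simp add: exp_diff[symmetric])
  finally have "exp (- h x) / ?Z \<le> exp (2 * K)" .
  then have "exp (- U x) * (exp (- h x) / ?Z) \<le> exp (- U x) * exp (2 * K)"
    by (rule mult_left_mono) simp
  then show "gibbs_density U h x \<le> exp (2 * K) * exp (- U x)"
    unfolding gibbs_density_eq by (simp only: mult.commute)
qed

lemma gibbs_density_lipschitz:
  assumes meas: "h1 \<in> borel_measurable borel" "h2 \<in> borel_measurable borel"
    and bdd: "\<And>x. \<bar>h1 x\<bar> \<le> K" "\<And>x. \<bar>h2 x\<bar> \<le> K"
    and close: "\<And>x. \<bar>h1 x - h2 x\<bar> \<le> \<delta>"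
  shows "\<bar>gibbs_density U h1 x - gibbs_density U h2 x\<bar>
           \<le> (exp (2 * K) + exp (4 * K)) * \<delta> * exp (- U x)"
proof -
  let ?Z1 = "gibbs_partition U h1" and ?Z2 = "gibbs_partition U h2"
  let ?A1 = "exp (- h1 x)" and ?A2 = "exp (- h2 x)"
  have Z_pos: "?Z1 > 0" "?Z2 > 0"
    using gibbs_partition_pos meas bdd by blast+
  have inv_Z: "1 / ?Z1 \<le> exp K" "1 / ?Z2 \<le> exp K"
  proof -
    have "1 / ?Z1 \<le> 1 / exp (- K)"
      using gibbs_partition_bounds(1)[OF meas(1) bdd(1)] Z_pos by (intro divide_left_mono) auto
    moreover have "1 / ?Z2 \<le> 1 / exp (- K)"
      using gibbs_partition_bounds(1)[OF meas(2) bdd(2)] Z_pos by (intro divide_left_mono) auto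
    ultimately show "1 / ?Z1 \<le> exp K" "1 / ?Z2 \<le> exp K"
      by (auto simp: exp_minus inverse_eq_divide)
  qed
  have \<delta>: "0 \<le> \<delta>" using close[of x] by linarith
  have dA: "\<bar>?A1 - ?A2\<bar> \<le> exp K * \<delta>"
    using abs_exp_perturbed_diff_le bdd close by blast
  have A2: "\<bar>?A2\<bar> \<le> exp K"
    using bdd(2)[of x] by (simp add: abs_le_iff)
  have dZ: "\<bar>?Z1 - ?Z2\<bar> \<le> exp K * \<delta>"
    using gibbs_partition_lipschitz[OF meas bdd close] .
  have "\<bar>?A1 / ?Z1 - ?A2 / ?Z2\<bar> \<le> \<bar>?A1 - ?A2\<bar> / ?Z1 + \<bar>?A2\<bar> * \<bar>?Z1 - ?Z2\<bar> / (?Z1 * ?Z2)"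
    by (rule abs_divide_diff_le[OF Z_pos])
  also have "\<dots> = \<bar>?A1 - ?A2\<bar> * (1 / ?Z1) + (\<bar>?A2\<bar> * \<bar>?Z1 - ?Z2\<bar>) * (1 / ?Z1 * (1 / ?Z2))"
    by simp
  also have "\<dots> \<le> (exp K * \<delta>) * exp K + (exp K * (exp K * \<delta>)) * (exp K * exp K)"
    using dA A2 dZ inv_Z Z_pos \<delta> by (intro add_mono mult_mono) auto
  also have "\<dots> = (exp (2 * K) + exp (4 * K)) * \<delta>"
    by (simp add: algebra_simps exp_add[symmetric])
  finally have "\<bar>?A1 / ?Z1 - ?A2 / ?Z2\<bar> \<le> (exp (2 * K) + exp (4 * K)) * \<delta>" .
  then have "exp (- U x) * \<bar>?A1 / ?Z1 - ?A2 / ?Z2\<bar> \<le> exp (- U x) * ((exp (2 * K) + exp (4 * K)) * \<delta>)"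
    by (rule mult_left_mono) simp
  then show ?thesis
    unfolding gibbs_density_eq right_diff_distrib[symmetric] abs_mult by (simp add: mult_ac)
qed

lemma gibbs_density_in_Prob_p:
  assumes [measurable]: "h \<in> borel_measurable borel" and h: "\<And>x. \<bar>h x\<bar> \<le> K"
    and moment: "integrable lborel (\<lambda>x. exp (- U x) * norm x powr p)"
  shows "density lborel (\<lambda>x. ennreal (gibbs_density U h x)) \<in> Prob_p p"
proof -
  let ?\<rho> = "gibbs_density U h"
  have [measurable]: "?\<rho> \<in> borel_measurable borel"
    unfolding gibbs_density_def by measurable
  have nonneg: "0 \<le> ?\<rho> x" for x
    using gibbs_density_bounds(1)[OF assms(1) h, of x] by (meson mult_nonneg_nonneg exp_ge_zero order_trans)
  have "integrable lborel ?\<rho>"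
    unfolding gibbs_density_def using integrable_exp_perturbed[OF assms(1) h] by (rule integrable_divide)
  moreover have "(\<integral>x. ?\<rho> x \<partial>lborel) = 1"
    using gibbs_partition_pos[OF assms(1) h] by (simp add: gibbs_density_def gibbs_partition_def)
  ultimately have "emeasure (density lborel ?\<rho>) UNIV = 1"
    using nonneg by (simp add: emeasure_density nn_integral_eq_integral)
  then have "prob_space (density lborel ?\<rho>)"
    by (intro prob_spaceI) simp
  moreover have "integrable (density lborel ?\<rho>) (\<lambda>x. norm x powr p)"
  proof (subst integrable_density)
    show "integrable lborel (\<lambda>x. ?\<rho> x *\<^sub>R norm x powr p)"
    proof (rule Bochner_Integration.integrable_bound)
      show "integrable lborel (\<lambda>x. exp (2 * K) * (exp (- U x) * norm x powr p))"
        using moment by (rule integrable_mult_right)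
      have "?\<rho> x * norm x powr p \<le> exp (2 * K) * exp (- U x) * norm x powr p" for x
        using gibbs_density_bounds(2)[OF assms(1) h] by (intro mult_right_mono) auto
      then show "AE x in lborel. norm (?\<rho> x *\<^sub>R norm x powr p)
          \<le> norm (exp (2 * K) * (exp (- U x) * norm x powr p))"
        using nonneg by (intro AE_I2) (simp add: mult.assoc)
    qed measurable
  qed (use nonneg in auto)
  ultimately show ?thesis
    by (simp add: Prob_p_def Prob_def)
qed

lemma gibbs_density_lipschitz_ennreal:
  assumes meas: "h1 \<in> borel_measurable borel" "h2 \<in> borel_measurable borel"
    and bdd: "\<And>x. \<bar>h1 x\<bar> \<le> K" "\<And>x. \<bar>h2 x\<bar> \<le> K"
    and "c > 0" and close: "\<And>x. ennreal \<bar>h1 x - h2 x\<bar> \<le> ennreal c * W"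
  shows "ennreal \<bar>gibbs_density U h1 x - gibbs_density U h2 x\<bar>
           \<le> ennreal ((exp (2 * K) + exp (4 * K)) * c) * W * ennreal (exp (- U x))"
proof (cases W rule: ennreal_cases)
  case (real w)
  have "\<bar>h1 y - h2 y\<bar> \<le> c * w" for y
    using close[of y] real \<open>c > 0\<close> by (simp add: ennreal_mult[symmetric] ennreal_le_iff)
  then have "\<bar>gibbs_density U h1 x - gibbs_density U h2 x\<bar>
      \<le> (exp (2 * K) + exp (4 * K)) * (c * w) * exp (- U x)"
    by (rule gibbs_density_lipschitz[OF meas bdd])
  then show ?thesis
    using real \<open>c > 0\<close> by (simp add: ennreal_mult[symmetric] ennreal_leI mult_ac)
next
  case top
  have "exp (2 * K) + exp (4 * K) > 0"
    by (simp add: add_pos_pos)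
  then show ?thesis
    using top \<open>c > 0\<close> by (simp add: ennreal_mult_top ennreal_top_mult)
qed

end

lemma Zconst_eq_gibbs_partition:
  "Zconst \<sigma> dF U m = gibbs_partition U (\<lambda>x. 2 / \<sigma>\<^sup>2 * dF m x)"
  by (simp add: Zconst_def gibbs_partition_def)

lemma hat_dens_eq_gibbs_density:
  "hat_dens \<sigma> dF U m = gibbs_density U (\<lambda>x. 2 / \<sigma>\<^sup>2 * dF m x)"
  by (simp add: fun_eq_iff hat_dens_def gibbs_density_def Zconst_eq_gibbs_partition)

theorem proposition14:
  fixes p \<sigma> :: real
    and F :: "('a::euclidean_space) measure \<Rightarrow> real"
    and dF :: "'a measure \<Rightarrow> 'a \<Rightarrow> real"
    and U :: "'a \<Rightarrow> real"
    and L_F M_F :: real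
  assumes p: "p \<ge> 1" and sigma: "\<sigma> > 0"
    and F_nonneg: "\<forall>m\<in>Prob. F m \<ge> 0"
    and dF_cont: "\<forall>m\<in>Prob. continuous_on UNIV (dF m)"
    and F_deriv: "\<forall>m0\<in>Prob. \<forall>m1\<in>Prob.
        ((\<lambda>l. (\<integral>x. dF (mixture l m0 m1) x \<partial>m1) - (\<integral>x. dF (mixture l m0 m1) x \<partial>m0))
           has_integral (F m1 - F m0)) {0..1}"
    and LF_pos: "L_F > 0" and MF_pos: "M_F > 0"
    and dF_lip: "\<forall>m\<in>Prob. \<forall>m'\<in>Prob. \<forall>x x'.
        ennreal \<bar>dF m x - dF m' x'\<bar> \<le> ennreal L_F * (Wass p m m' + ennreal (dist x x'))"
    and dF_bdd: "\<forall>m\<in>Prob. \<forall>x. \<bar>dF m x\<bar> \<le> M_F"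
    and U_meas: "U \<in> borel_measurable borel"
    and U_int: "integrable lborel (\<lambda>x. exp (- U x))"
    and U_norm: "(\<integral>x. exp (- U x) \<partial>lborel) = 1"
    and U_essinf: "\<exists>b. AE x in lborel. U x \<ge> b"
    and U_growth: "Liminf at_infinity (\<lambda>x. ereal (U x / norm x powr p)) > 0"
  shows "(\<forall>m\<in>Prob_p p.
            integrable lborel (\<lambda>x. exp (- (2 / \<sigma>\<^sup>2) * dF m x - U x))
          \<and> Zconst \<sigma> dF U m > 0
          \<and> density lborel (\<lambda>x. ennreal (hat_dens \<sigma> dF U m x)) \<in> Prob_p p)
       \<and> (\<exists>c C. 0 < c \<and> c < 1 \<and> 1 < C \<and>
            (\<forall>m\<in>Prob_p p. \<forall>x. c * exp (- U x) \<le> hat_dens \<sigma> dF U m x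
                                 \<and> hat_dens \<sigma> dF U m x \<le> C * exp (- U x)))
       \<and> (\<exists>L>0. \<forall>m\<in>Prob_p p. \<forall>m'\<in>Prob_p p. \<forall>x.
            ennreal \<bar>hat_dens \<sigma> dF U m x - hat_dens \<sigma> dF U m' x\<bar>
              \<le> ennreal L * Wass p m m' * ennreal (exp (- U x)))"
proof -
  define k where "k = 2 / \<sigma>\<^sup>2"
  define h where "h m = (\<lambda>x. k * dF m x)" for m
  define K where "K = k * M_F"
  define L where "L = (exp (2 * K) + exp (4 * K)) * (k * L_F)"
  have k: "k > 0" and K: "K > 0" and L: "L > 0"
    using sigma MF_pos LF_pos by (simp_all add: k_def K_def L_def add_pos_pos)
  interpret normalized_potential U
    using U_meas U_int U_norm by unfold_locales
  have Prob: "m \<in> Prob" if "m \<in> Prob_p p" for m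
    using that by (simp add: Prob_p_def)
  have h_meas: "h m \<in> borel_measurable borel" if "m \<in> Prob_p p" for m
    using dF_cont Prob[OF that] unfolding h_def
    by (intro borel_measurable_continuous_onI continuous_intros) auto
  have h_bdd: "\<bar>h m x\<bar> \<le> K" if "m \<in> Prob_p p" for m x
    using dF_bdd Prob[OF that] k by (simp add: h_def K_def abs_mult)
  have h_close: "ennreal \<bar>h m x - h m' x\<bar> \<le> ennreal (k * L_F) * Wass p m m'"
    if "m \<in> Prob_p p" "m' \<in> Prob_p p" for m m' x
  proof -
    have "ennreal \<bar>h m x - h m' x\<bar> = ennreal k * ennreal \<bar>dF m x - dF m' x\<bar>"
      using k by (simp add: h_def right_diff_distrib[symmetric] abs_mult ennreal_mult)
    also have "\<dots> \<le> ennreal k * (ennreal L_F * Wass p m m')"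
      using dF_lip[rule_format, OF Prob[OF that(1)] Prob[OF that(2)], of x x]
      by (intro mult_left_mono) auto
    also have "\<dots> = ennreal (k * L_F) * Wass p m m'"
      using k LF_pos by (simp add: ennreal_mult mult.assoc)
    finally show ?thesis .
  qed
  obtain a R where "a > 0" "\<And>x. R \<le> norm x \<Longrightarrow> a * norm x powr p \<le> U x"
    using powr_growth_of_Liminf_pos[OF U_growth] by blast
  then have moment: "integrable lborel (\<lambda>x. exp (- U x) * norm x powr p)"
    using integrable_exp_neg_mult_norm_powr[OF U_meas U_int p] by blast
  have hat: "exp (- (2 / \<sigma>\<^sup>2) * dF m x - U x) = exp (- h m x - U x)"
    "Zconst \<sigma> dF U m = gibbs_partition U (h m)" "hat_dens \<sigma> dF U m = gibbs_density U (h m)" for m x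
    by (simp_all add: h_def k_def Zconst_eq_gibbs_partition hat_dens_eq_gibbs_density)
  show ?thesis
    unfolding hat
    apply (intro conjI)
    subgoal
      using h_meas h_bdd integrable_exp_perturbed gibbs_partition_pos
        gibbs_density_in_Prob_p[OF _ _ moment] by blast
    subgoal
      using K h_meas h_bdd gibbs_density_bounds
      by (intro exI[of _ "exp (- (2 * K))"] exI[of _ "exp (2 * K)"]) auto
    subgoal
    proof (intro exI[of _ L] conjI ballI allI)
      fix m m' :: "'a measure" and x :: 'a
      assume m: "m \<in> Prob_p p" "m' \<in> Prob_p p"
      show "ennreal \<bar>gibbs_density U (h m) x - gibbs_density U (h m') x\<bar>
          \<le> ennreal L * Wass p m m' * ennreal (exp (- U x))"
        unfolding L_def
        using k LF_pos
        by (intro gibbs_density_lipschitz_ennreal[OF h_meas[OF m(1)] h_meas[OF m(2)] h_bdd[OF m(1)]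
              h_bdd[OF m(2)] _ h_close[OF m]]) auto
    qed (rule L)
    done
qed

end
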